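(* Let $k\in\mathbb{N}$. (a) Let $P\in\mathbb{C}[x]$. There exists $Q\in\mathbb{C}[x]$ such that $P,Q$ satisfy (i)–(iii) below if and only if $\deg P\le k$, $P$ has parity $(k\bmod 2)$, and (iv.a) $|P(x)|\le 1$ for all $x\in[-1,1]$; (iv.b) $|P(x)|\ge 1$ for all $x\in(-\infty,-1]\cup[1,\infty)$; (iv.c) if $k$ is even, then $P(ix)P^*(ix)\ge 1$ for all $x\in\mathbb{R}$. (b) Let $Q\in\mathbb{C}[x]$. There exists $P\in\mathbb{C}[x]$ such that $P,Q$ satisfy (i)–(iii) if and only if $\deg Q\le k-1$, $Q$ has parity $(k-1\bmod 2)$, and (v.a) $\sqrt{1-x^2}\,|Q(x)|\le 1$ for all $x\in[-1,1]$; (v.b) if $k$ is odd, then $(1+x^2)Q(ix)Q^*(ix)\ge 1$ for all $x\in\mathbb{R}$. Here the conditions are: (i) $\deg P\le k$, $\deg Q\le k-1$; (ii) $P$ has parity $(k\bmod 2)$ and $Q$ has parity $(k-1\bmod 2)$; (iii) $|P(x)|^2+(1-x^2)|Q(x)|^2=1$ for all $x\in[-1,1]$.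
   Context: For $P(x)=\sum_j a_jx^j\in\mathbb{C}[x]$, $P^*(x):=\sum_j \overline{a_j}x^j$. A polynomial is even (odd) if all its odd-power (even-power) coefficients vanish; the zero polynomial is both. $P$ has parity $z\in\mathbb{Z}$ if $z$ is even and $P$ is even, or $z$ is odd and $P$ is odd. *)

theory Defs
  imports "HOL-Computational_Algebra.Polynomial" Complex_Main
begin

definition pstar :: "complex poly \<Rightarrow> complex poly" where
  "pstar P = map_poly cnj P"

definition even_poly :: "complex poly \<Rightarrow> bool" where
  "even_poly P \<longleftrightarrow> (\<forall>j. odd j \<longrightarrow> coeff P j = 0)"

definition odd_poly :: "complex poly \<Rightarrow> bool" where
  "odd_poly P \<longleftrightarrow> (\<forall>j. even j \<longrightarrow> coeff P j = 0)"

definition has_parity :: "complex poly \<Rightarrow> int \<Rightarrow> bool" where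
  "has_parity P z \<longleftrightarrow> (even z \<and> even_poly P) \<or> (odd z \<and> odd_poly P)"

text \<open>deg P \<le> d with the convention deg 0 = -infinity.\<close>
definition deg_le :: "complex poly \<Rightarrow> int \<Rightarrow> bool" where
  "deg_le P d \<longleftrightarrow> P = 0 \<or> int (degree P) \<le> d"

definition qsp_conds :: "nat \<Rightarrow> complex poly \<Rightarrow> complex poly \<Rightarrow> bool" where
  "qsp_conds k P Q \<longleftrightarrow>
     deg_le P (int k) \<and> deg_le Q (int k - 1) \<and>
     has_parity P (int k mod 2) \<and> has_parity Q ((int k - 1) mod 2) \<and>
     (\<forall>x::real. -1 \<le> x \<and> x \<le> 1 \<longrightarrow>
        (cmod (poly P (of_real x)))^2 + (1 - x^2) * (cmod (poly Q (of_real x)))^2 = 1)"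

end

theory Submission
  imports Defs "HOL-Computational_Algebra.Fundamental_Theorem_Algebra" "HOL-Analysis.Complex_Analysis_Basics"
begin

(* On [-1, 1] the condition |P|^2 + (1 - x^2) |Q|^2 = 1 is the polynomial identity
   P P^* + (1 - x^2) Q Q^* = 1. Given P, conditions (iv.a/b) force |P(1)| = |P(-1)| = 1, so
   1 - P P^* = (1 - x^2) B, and one needs B = Q Q^*; given Q, one needs
   G = 1 - (1 - x^2) Q Q^* = P P^*. Both B and G are even, and the remaining conditions say that
   they are nonnegative on the real axis and of a fixed sign on the imaginary axis.
   Writing such an even polynomial as C(x^2), C (resp. C / x) is nonnegative on the real line,
   hence of the form R R^* by the Fejer-Riesz theorem, and S = R(x^2) (resp. x R(x^2)) is a
   square root of the required parity. *)

section \<open>Conjugate polynomials\<close>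

lemma poly_pstar [simp]: "poly (pstar p) z = cnj (poly p (cnj z))"
  by (simp add: pstar_def)

lemma poly_eq_by_eval: "(\<And>z. poly p z = poly q z) \<Longrightarrow> p = q"
  for p q :: "complex poly"
  using poly_eq_poly_eq_iff by blast

lemma poly_eq_on_interval:
  fixes p q :: "complex poly" and a b :: real
  assumes "a < b" "\<And>x. a \<le> x \<Longrightarrow> x \<le> b \<Longrightarrow> poly p (of_real x) = poly q (of_real x)"
  shows "p = q"
proof (rule ccontr)
  assume "p \<noteq> q"
  then have "finite {z. poly (p - q) z = 0}" by (intro poly_roots_finite) simp
  moreover have "of_real ` {a..b} \<subseteq> {z. poly (p - q) z = 0}" using assms(2) by auto
  moreover have "infinite (complex_of_real ` {a..b})"
    using assms(1) by (auto simp: finite_image_iff inj_on_def)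
  ultimately show False by (meson finite_subset)
qed

lemma pstar_mult [simp]: "pstar (p * q) = pstar p * pstar q"
  by (rule poly_eq_by_eval) simp

lemma pstar_pcompose: "pstar (p \<circ>\<^sub>p q) = pstar p \<circ>\<^sub>p pstar q"
  by (rule poly_eq_by_eval) (simp add: poly_pcompose)

lemma pstar_linear [simp]: "pstar [:a, 1:] = [:cnj a, 1:]"
  by (rule poly_eq_by_eval) simp

lemma pstar_square_monom [simp]: "pstar [:0, 0, 1:] = [:0, 0, 1:]"
  by (rule poly_eq_by_eval) simp

lemma pstar_eq_self_if_real:
  assumes "\<And>x. poly p (of_real x) \<in> \<real>"
  shows "pstar p = p"
  by (rule poly_eq_on_interval[of 0 1]) (use assms in \<open>auto simp: Reals_cnj_iff\<close>)

lemma degree_pstar [simp]: "degree (pstar p) = degree p"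
  unfolding pstar_def by (rule degree_map_poly) simp

lemma pstar_eq_0_iff [simp]: "pstar p = 0 \<longleftrightarrow> p = 0"
  unfolding pstar_def by (auto simp: poly_eq_iff coeff_map_poly)

lemma degree_mult_pstar: "degree (p * pstar p) = 2 * degree p"
  by (cases "p = 0") (simp_all add: degree_mult_eq)

lemma deg_le_of_degree_mult_pstar:
  assumes "int (degree (m * (s * pstar s))) \<le> 2 * d + int (degree m)" "m \<noteq> 0"
  shows "deg_le s d"
  using assms by (cases "s = 0") (auto simp: deg_le_def degree_mult_eq degree_mult_pstar)

lemma poly_mult_pstar_of_real:
  "poly (p * pstar p) (of_real x) = of_real ((cmod (poly p (of_real x)))\<^sup>2)"
  using complex_norm_square[of "poly p (of_real x)"] by simp

section \<open>Even and odd polynomials\<close>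

lemma poly_pcompose_reflect [simp]:
  "poly (p \<circ>\<^sub>p [:0, -1:]) z = poly p (- z)" for p :: "'a :: comm_ring_1 poly"
  by (simp add: poly_pcompose)

lemma even_poly_iff: "even_poly p \<longleftrightarrow> (\<forall>z. poly p (- z) = poly p z)"
proof -
  have "(-1) ^ n * coeff p n = coeff p n \<longleftrightarrow> (odd n \<longrightarrow> coeff p n = 0)" for n
    by (cases "even n") auto
  then have "even_poly p \<longleftrightarrow> p \<circ>\<^sub>p [:0, -1:] = p"
    by (auto simp: even_poly_def poly_eq_iff coeff_pcompose_linear)
  also have "\<dots> \<longleftrightarrow> (\<forall>z. poly p (- z) = poly p z)"
    by (auto simp: fun_eq_iff simp flip: poly_eq_poly_eq_iff)
  finally show ?thesis .
qed

lemma odd_poly_iff: "odd_poly p \<longleftrightarrow> (\<forall>z. poly p (- z) = - poly p z)"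
proof -
  have "(-1) ^ n * coeff p n = - coeff p n \<longleftrightarrow> (even n \<longrightarrow> coeff p n = 0)" for n
    by (cases "even n") auto
  then have "odd_poly p \<longleftrightarrow> p \<circ>\<^sub>p [:0, -1:] = - p"
    by (auto simp: odd_poly_def poly_eq_iff coeff_pcompose_linear)
  also have "\<dots> \<longleftrightarrow> (\<forall>z. poly p (- z) = - poly p z)"
    by (auto simp: fun_eq_iff simp flip: poly_eq_poly_eq_iff)
  finally show ?thesis .
qed

lemma has_parity_iff: "has_parity p z \<longleftrightarrow> (if even z then even_poly p else odd_poly p)"
  by (simp add: has_parity_def)

lemma even_poly_mult_pstar: "has_parity p z \<Longrightarrow> even_poly (p * pstar p)"
  by (auto simp: has_parity_def even_poly_iff odd_poly_iff)

lemma even_poly_cancel: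
  assumes "even_poly (m * p)" "even_poly m" "m \<noteq> 0"
  shows "even_poly p"
proof -
  have "m * (p \<circ>\<^sub>p [:0, -1:]) = m * p"
    using assms(1,2) by (intro poly_eq_by_eval) (simp add: even_poly_iff)
  then have "p \<circ>\<^sub>p [:0, -1:] = p" using assms(3) by simp
  then show ?thesis by (metis poly_pcompose_reflect even_poly_iff)
qed

lemma poly_mult_pstar_imag_even:
  "even_poly p \<Longrightarrow> poly (p * pstar p) (\<i> * of_real t) = of_real ((cmod (poly p (\<i> * of_real t)))\<^sup>2)"
  using complex_norm_square[of "poly p (\<i> * of_real t)"] by (simp add: even_poly_iff)

lemma poly_mult_pstar_imag_odd:
  "odd_poly p \<Longrightarrow> poly (p * pstar p) (\<i> * of_real t) = - of_real ((cmod (poly p (\<i> * of_real t)))\<^sup>2)"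
  using complex_norm_square[of "poly p (\<i> * of_real t)"] by (simp add: odd_poly_iff)

lemma poly_mult_pstar_imag:
  assumes "has_parity p n"
  shows "poly (p * pstar p) (\<i> * of_real t) \<in> (if even n then \<real>\<^sub>\<ge>\<^sub>0 else \<real>\<^sub>\<le>\<^sub>0)"
  using assms poly_mult_pstar_imag_even[of p t] poly_mult_pstar_imag_odd[of p t]
  by (auto simp: has_parity_iff)

lemma poly_split_even_odd:
  "\<exists>r s. p = r \<circ>\<^sub>p [:0, 0, 1:] + [:0, 1:] * s \<circ>\<^sub>p [:0, 0, 1:]" for p :: "complex poly"
proof (induction p)
  case 0
  show ?case by (intro exI[of _ 0]) simp
next
  case (pCons a p)
  then obtain r s where p: "p = r \<circ>\<^sub>p [:0, 0, 1:] + [:0, 1:] * s \<circ>\<^sub>p [:0, 0, 1:]" by blast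
  have "pCons a p = pCons a s \<circ>\<^sub>p [:0, 0, 1:] + [:0, 1:] * r \<circ>\<^sub>p [:0, 0, 1:]"
    by (rule poly_eq_by_eval) (simp add: p poly_pcompose algebra_simps power2_eq_square)
  then show ?case by blast
qed

lemma even_poly_imp_pcompose_square:
  assumes "even_poly p"
  obtains r where "p = r \<circ>\<^sub>p [:0, 0, 1:]"
proof -
  obtain r s where p: "p = r \<circ>\<^sub>p [:0, 0, 1:] + [:0, 1:] * s \<circ>\<^sub>p [:0, 0, 1:]"
    using poly_split_even_odd by blast
  have "poly ([:0, 1:] * s \<circ>\<^sub>p [:0, 0, 1:]) z = 0" for z
    using assms[unfolded even_poly_iff, rule_format, of z] by (simp add: p poly_pcompose)
  then have "[:0, 1:] * s \<circ>\<^sub>p [:0, 0, 1:] = 0" by (intro poly_eq_by_eval) simp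
  then show ?thesis using p that by simp
qed

lemma poly_pcompose_square_csqrt [simp]: "poly (r \<circ>\<^sub>p [:0, 0, 1:]) (csqrt z) = poly r z"
  by (simp add: poly_pcompose flip: power2_eq_square)

section \<open>Polynomials nonnegative on the real line\<close>

lemma nonpos_Reals_divide_nonpos:
  fixes a b :: "'a :: {field, real_div_algebra}"
  shows "a \<in> \<real>\<^sub>\<le>\<^sub>0 \<Longrightarrow> b \<in> \<real>\<^sub>\<le>\<^sub>0 \<Longrightarrow> a / b \<in> \<real>\<^sub>\<ge>\<^sub>0"
  using nonneg_Reals_divide_I[of "- a" "- b"] by (simp only: minus_divide_divide uminus_nonneg_Reals_iff)

lemma poly_of_real_in_closed_within:
  fixes p :: "complex poly"
  assumes "closed S" "at x within U \<noteq> bot" "\<forall>\<^sub>F t in at x within U. poly p (of_real t) \<in> S"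
  shows "poly p (of_real x) \<in> S"
proof (rule Lim_in_closed_set[OF assms(1,3,2)])
  have "isCont (\<lambda>t. poly p (of_real t)) x" by (intro continuous_intros)
  then show "((\<lambda>t. poly p (of_real t)) \<longlongrightarrow> poly p (of_real x)) (at x within U)"
    unfolding isCont_def by (rule tendsto_within_subset) simp
qed

lemma poly_of_real_in_closed_cofinite:
  fixes p :: "complex poly"
  assumes "closed S" "finite E" "\<And>t. t \<notin> E \<Longrightarrow> poly p (of_real t) \<in> S"
  shows "poly p (of_real x) \<in> S"
proof (rule poly_of_real_in_closed_within[OF assms(1), of x UNIV])
  have "\<forall>\<^sub>F t in at x. \<forall>e\<in>E. t \<noteq> e"
    by (intro eventually_ball_finite assms(2) ballI eventually_neq_at_within)
  then show "\<forall>\<^sub>F t in at x. poly p (of_real t) \<in> S"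
    by eventually_elim (use assms(3) in blast)
qed simp

lemma nonneg_Reals_cancel_mult_pstar:
  fixes l c :: "complex poly"
  assumes "\<And>x. poly (l * pstar l * c) (of_real x) \<in> \<real>\<^sub>\<ge>\<^sub>0" "l \<noteq> 0"
  shows "poly c (of_real x) \<in> \<real>\<^sub>\<ge>\<^sub>0"
proof (rule poly_of_real_in_closed_cofinite[OF closed_nonneg_Reals_complex])
  have "finite (of_real -` {z. poly l z = 0} :: real set)"
    by (intro finite_vimageI poly_roots_finite assms(2)) (simp add: inj_def)
  then show "finite {t. poly l (of_real t) = 0}" by (simp add: vimage_def)
  fix t assume "t \<notin> {t. poly l (of_real t) = 0}"
  then have "0 < (cmod (poly l (of_real t)))\<^sup>2" by simp
  moreover have "poly (l * pstar l * c) (of_real t) = of_real ((cmod (poly l (of_real t)))\<^sup>2) * poly c (of_real t)"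
    by (subst poly_mult) (simp only: poly_mult_pstar_of_real)
  ultimately show "poly c (of_real t) \<in> \<real>\<^sub>\<ge>\<^sub>0"
    using assms(1)[of t] by (metis nonneg_Reals_divide_I nonneg_Reals_of_real_iff less_imp_le
        nonzero_mult_div_cancel_left of_real_eq_0_iff order.strict_iff_not)
qed

text \<open>The cofactor of \<open>x - r\<close> changes sign at the real root \<open>r\<close>, hence vanishes there.\<close>

lemma nonneg_Reals_poly_real_root_dvd:
  fixes c :: "complex poly"
  assumes nonneg: "\<And>x. poly c (of_real x) \<in> \<real>\<^sub>\<ge>\<^sub>0" and root: "poly c (of_real r) = 0"
  shows "[:- of_real r, 1:] * [:- of_real r, 1:] dvd c"
proof -
  obtain c1 where c: "c = [:- of_real r, 1:] * c1"
    using root by (metis poly_eq_0_iff_dvd dvdE)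
  have c1: "poly c1 (of_real t) = poly c (of_real t) / of_real (t - r)" if "t \<noteq> r" for t
    using that by (simp add: c field_simps)
  have "poly c1 (of_real r) \<in> \<real>\<^sub>\<ge>\<^sub>0"
  proof (rule poly_of_real_in_closed_within[OF closed_nonneg_Reals_complex, of r "{r<..}"])
    show "\<forall>\<^sub>F t in at r within {r<..}. poly c1 (of_real t) \<in> \<real>\<^sub>\<ge>\<^sub>0"
      unfolding eventually_at_filter
      by (intro always_eventually allI impI) (simp add: c1 nonneg nonneg_Reals_divide_I del: of_real_diff)
  qed simp
  moreover have "poly c1 (of_real r) \<in> \<real>\<^sub>\<le>\<^sub>0"
  proof (rule poly_of_real_in_closed_within[OF closed_nonpos_Reals_complex, of r "{..<r}"])
    show "\<forall>\<^sub>F t in at r within {..<r}. poly c1 (of_real t) \<in> \<real>\<^sub>\<le>\<^sub>0"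
      unfolding eventually_at_filter
      by (intro always_eventually allI impI) (simp add: c1 nonneg nonpos_Reals_divide_I1 del: of_real_diff)
  qed simp
  ultimately have "poly c1 (of_real r) = 0"
    by (auto simp: complex_nonneg_Reals_iff complex_nonpos_Reals_iff complex_eq_iff)
  then obtain c2 where "c1 = [:- of_real r, 1:] * c2"
    by (metis poly_eq_0_iff_dvd dvdE)
  then show ?thesis by (simp only: c flip: mult.assoc) (rule dvd_triv_left)
qed

lemma pstar_eq_self_nonreal_root_dvd:
  fixes c :: "complex poly"
  assumes "pstar c = c" "poly c a = 0" "a \<notin> \<real>"
  shows "[:- a, 1:] * pstar [:- a, 1:] dvd c"
proof -
  obtain c1 where c: "c = [:- a, 1:] * c1"
    using assms(2) by (metis poly_eq_0_iff_dvd dvdE)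
  have "poly c (cnj a) = 0"
    using assms(1,2) by (metis poly_pstar complex_cnj_cnj complex_cnj_zero)
  moreover have "cnj a \<noteq> a" using assms(3) by (metis Reals_cnj_iff)
  ultimately have "poly c1 (cnj a) = 0" by (simp add: c)
  then obtain c2 where "c1 = [:- cnj a, 1:] * c2"
    by (metis poly_eq_0_iff_dvd dvdE)
  then have "c = [:- a, 1:] * pstar [:- a, 1:] * c2"
    by (simp only: c mult.assoc pstar_linear complex_cnj_minus)
  then show ?thesis by (rule dvdI)
qed

lemma nonneg_Reals_poly_linear_factor:
  fixes c :: "complex poly"
  assumes "\<And>x. poly c (of_real x) \<in> \<real>\<^sub>\<ge>\<^sub>0" "degree c \<noteq> 0"
  obtains l where "degree l = 1" "l * pstar l dvd c"
proof -
  obtain a where a: "poly c a = 0"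
    using fundamental_theorem_of_algebra[of c] assms(2) constant_degree[of c] by metis
  show ?thesis
  proof (cases "a \<in> \<real>")
    case True
    then obtain r where "a = of_real r" by (auto elim: Reals_cases)
    then have "[:- a, 1:] * pstar [:- a, 1:] dvd c"
      using nonneg_Reals_poly_real_root_dvd[OF assms(1)] a by simp
    then show ?thesis by (intro that[of "[:- a, 1:]"]) simp_all
  next
    case False
    have "pstar c = c" using assms(1) by (intro pstar_eq_self_if_real) auto
    then show ?thesis
      using pstar_eq_self_nonreal_root_dvd False a by (intro that[of "[:- a, 1:]"]) simp_all
  qed
qed

text \<open>The Fejer--Riesz theorem for the real line.\<close>

theorem nonneg_Reals_poly_eq_mult_pstar:
  fixes c :: "complex poly"
  assumes "\<And>x. poly c (of_real x) \<in> \<real>\<^sub>\<ge>\<^sub>0"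
  shows "\<exists>r. c = r * pstar r"
  using assms
proof (induction "degree c" arbitrary: c rule: less_induct)
  case less
  show ?case
  proof (cases "degree c = 0")
    case True
    then obtain a where c: "c = [:a:]" by (metis degree_eq_zeroE)
    then obtain s where "a = of_real s" "0 \<le> s"
      using less.prems[of 0] by (auto elim: nonneg_Reals_cases)
    then have "c = [:of_real (sqrt s):] * pstar [:of_real (sqrt s):]"
      by (intro poly_eq_by_eval) (simp add: c flip: of_real_mult)
    then show ?thesis by blast
  next
    case False
    obtain l where l: "degree l = 1" "l * pstar l dvd c"
      using nonneg_Reals_poly_linear_factor less.prems False by blast
    then obtain c2 where c: "c = l * pstar l * c2" by blast
    have "l \<noteq> 0" "c2 \<noteq> 0" using l(1) c False by auto
    then have "degree c = 2 + degree c2" using l(1) by (simp add: c degree_mult_eq)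
    moreover have "\<And>x. poly c2 (of_real x) \<in> \<real>\<^sub>\<ge>\<^sub>0"
      using nonneg_Reals_cancel_mult_pstar less.prems \<open>l \<noteq> 0\<close> unfolding c by blast
    ultimately obtain r2 where "c2 = r2 * pstar r2" using less.hyps by fastforce
    then have "c = (l * r2) * pstar (l * r2)" by (simp add: c ac_simps)
    then show ?thesis by blast
  qed
qed

section \<open>Square roots of even polynomials\<close>

lemma even_poly_eq_mult_pstar_even:
  assumes "even_poly g" "\<And>x. poly g (of_real x) \<in> \<real>\<^sub>\<ge>\<^sub>0"
    "\<And>x. poly g (\<i> * of_real x) \<in> \<real>\<^sub>\<ge>\<^sub>0"
  shows "\<exists>s. even_poly s \<and> g = s * pstar s"
proof -
  obtain c where g: "g = c \<circ>\<^sub>p [:0, 0, 1:]" using even_poly_imp_pcompose_square assms(1) .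
  have "poly c (of_real x) \<in> \<real>\<^sub>\<ge>\<^sub>0" for x
  proof -
    have "poly c (of_real x) = poly g (csqrt (of_real x))" by (simp add: g)
    then show ?thesis
      using assms(2,3) by (cases "x \<ge> 0") (simp_all add: csqrt_of_real' mult.commute)
  qed
  then obtain r where "c = r * pstar r" using nonneg_Reals_poly_eq_mult_pstar by blast
  then have "g = r \<circ>\<^sub>p [:0, 0, 1:] * pstar (r \<circ>\<^sub>p [:0, 0, 1:])"
    by (simp add: g pcompose_mult pstar_pcompose)
  moreover have "even_poly (r \<circ>\<^sub>p [:0, 0, 1:])" by (simp add: even_poly_iff poly_pcompose)
  ultimately show ?thesis by blast
qed

lemma even_poly_eq_mult_pstar_odd:
  assumes "even_poly g" "\<And>x. poly g (of_real x) \<in> \<real>\<^sub>\<ge>\<^sub>0"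
    "\<And>x. poly g (\<i> * of_real x) \<in> \<real>\<^sub>\<le>\<^sub>0"
  shows "\<exists>s. odd_poly s \<and> g = s * pstar s"
proof -
  obtain c where g: "g = c \<circ>\<^sub>p [:0, 0, 1:]" using even_poly_imp_pcompose_square assms(1) .
  have "poly c 0 \<in> \<real>\<^sub>\<ge>\<^sub>0" "poly c 0 \<in> \<real>\<^sub>\<le>\<^sub>0"
    using assms(2,3)[of 0] by (simp_all add: g poly_pcompose)
  then have "poly c 0 = 0"
    by (auto simp: complex_nonneg_Reals_iff complex_nonpos_Reals_iff complex_eq_iff)
  then obtain d where c: "c = [:0, 1:] * d" by (metis poly_eq_0_iff_dvd dvdE minus_zero)
  have "poly d (of_real x) \<in> \<real>\<^sub>\<ge>\<^sub>0" for x
  proof (rule poly_of_real_in_closed_cofinite[OF closed_nonneg_Reals_complex, of "{0}"])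
    fix t :: real assume "t \<notin> {0}"
    then have d: "poly d (of_real t) = poly g (csqrt (of_real t)) / of_real t" by (simp add: g c)
    consider "t > 0" | "t < 0" using \<open>t \<notin> {0}\<close> by fastforce
    then show "poly d (of_real t) \<in> \<real>\<^sub>\<ge>\<^sub>0"
    proof cases
      case 1
      then have "poly g (csqrt (of_real t)) \<in> \<real>\<^sub>\<ge>\<^sub>0"
        using assms(2) by (simp add: csqrt_of_real)
      then show ?thesis using 1 by (simp add: d nonneg_Reals_divide_I)
    next
      case 2
      then have "poly g (csqrt (of_real t)) \<in> \<real>\<^sub>\<le>\<^sub>0"
        using assms(3) by (simp add: csqrt_of_real' mult.commute)
      moreover have "of_real t \<in> \<real>\<^sub>\<le>\<^sub>0" using 2 by simp
      ultimately show ?thesis by (simp add: d nonpos_Reals_divide_nonpos)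
    qed
  qed simp
  then obtain r where d: "d = r * pstar r" using nonneg_Reals_poly_eq_mult_pstar by blast
  define s where "s = [:0, 1:] * r \<circ>\<^sub>p [:0, 0, 1:]"
  have "g = s * pstar s"
    by (intro poly_eq_by_eval) (simp add: g c d s_def poly_pcompose power2_eq_square)
  moreover have "odd_poly s" by (simp add: odd_poly_iff s_def poly_pcompose)
  ultimately show ?thesis by blast
qed

lemma even_poly_eq_mult_pstar:
  assumes "even_poly g" "\<And>x. poly g (of_real x) \<in> \<real>\<^sub>\<ge>\<^sub>0"
    "\<And>x. poly g (\<i> * of_real x) \<in> (if even n then \<real>\<^sub>\<ge>\<^sub>0 else \<real>\<^sub>\<le>\<^sub>0)"
  shows "\<exists>s. has_parity s n \<and> g = s * pstar s"
  using assms even_poly_eq_mult_pstar_even[of g] even_poly_eq_mult_pstar_odd[of g]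
  by (cases "even n") (auto simp: has_parity_iff)

section \<open>The QSP conditions\<close>

lemma poly_one_minus_square [simp]: "poly [:1, 0, -1:] z = 1 - z\<^sup>2" for z :: complex
  by (simp add: power2_eq_square)

lemma Reals_Re_ge_one_iff: "z \<in> \<real> \<and> 1 \<le> Re z \<longleftrightarrow> z - 1 \<in> \<real>\<^sub>\<ge>\<^sub>0"
  by (auto simp: complex_nonneg_Reals_iff complex_is_Real_iff)

lemma poly_qsp_of_real:
  "poly (p * pstar p + [:1, 0, -1:] * (q * pstar q)) (of_real x) =
     of_real ((cmod (poly p (of_real x)))\<^sup>2 + (1 - x\<^sup>2) * (cmod (poly q (of_real x)))\<^sup>2)"
proof -
  have "poly (p * pstar p + [:1, 0, -1:] * (q * pstar q)) (of_real x) =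
      poly (p * pstar p) (of_real x) + poly [:1, 0, -1:] (of_real x) * poly (q * pstar q) (of_real x)"
    by (simp only: poly_add poly_mult)
  then show ?thesis by (simp only: poly_mult_pstar_of_real poly_one_minus_square) simp
qed

lemma poly_qsp_imag:
  "poly (p * pstar p + [:1, 0, -1:] * (q * pstar q)) (\<i> * of_real t) =
     poly (p * pstar p) (\<i> * of_real t) + of_real (1 + t\<^sup>2) * poly (q * pstar q) (\<i> * of_real t)"
  by (simp only: poly_add poly_mult poly_one_minus_square) (simp add: power_mult_distrib)

lemma qsp_identity_iff:
  "(\<forall>x::real. -1 \<le> x \<and> x \<le> 1 \<longrightarrow>
      (cmod (poly p (of_real x)))\<^sup>2 + (1 - x\<^sup>2) * (cmod (poly q (of_real x)))\<^sup>2 = 1) \<longleftrightarrow>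
   p * pstar p + [:1, 0, -1:] * (q * pstar q) = 1"
proof -
  have "(\<forall>x::real. -1 \<le> x \<and> x \<le> 1 \<longrightarrow>
      (cmod (poly p (of_real x)))\<^sup>2 + (1 - x\<^sup>2) * (cmod (poly q (of_real x)))\<^sup>2 = 1) \<longleftrightarrow>
    (\<forall>x::real. -1 \<le> x \<and> x \<le> 1 \<longrightarrow>
      poly (p * pstar p + [:1, 0, -1:] * (q * pstar q)) (of_real x) = poly 1 (of_real x))"
    by (simp only: poly_qsp_of_real poly_1 of_real_eq_1_iff)
  also have "\<dots> \<longleftrightarrow> p * pstar p + [:1, 0, -1:] * (q * pstar q) = 1"
  proof
    assume "\<forall>x::real. -1 \<le> x \<and> x \<le> 1 \<longrightarrow>
        poly (p * pstar p + [:1, 0, -1:] * (q * pstar q)) (of_real x) = poly 1 (of_real x)"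
    then show "p * pstar p + [:1, 0, -1:] * (q * pstar q) = 1"
      by (intro poly_eq_on_interval[of "-1" 1]) auto
  qed simp
  finally show ?thesis .
qed

lemma qsp_conds_iff:
  "qsp_conds k p q \<longleftrightarrow>
     deg_le p (int k) \<and> deg_le q (int k - 1) \<and>
     has_parity p (int k mod 2) \<and> has_parity q ((int k - 1) mod 2) \<and>
     p * pstar p + [:1, 0, -1:] * (q * pstar q) = 1"
  by (simp only: qsp_conds_def qsp_identity_iff)

lemma qsp_identity_of_real:
  assumes "p * pstar p + [:1, 0, -1:] * (q * pstar q) = 1"
  shows "(cmod (poly p (of_real x)))\<^sup>2 + (1 - x\<^sup>2) * (cmod (poly q (of_real x)))\<^sup>2 = 1"
  using poly_qsp_of_real[of p q x] by (metis assms of_real_eq_1_iff poly_1)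

lemma qsp_identity_imag:
  assumes "p * pstar p + [:1, 0, -1:] * (q * pstar q) = 1"
  shows "poly (p * pstar p) (\<i> * of_real t) + of_real (1 + t\<^sup>2) * poly (q * pstar q) (\<i> * of_real t) = 1"
  using poly_qsp_imag[of p q t] by (metis assms poly_1)

lemma qsp_identity_P_bounds:
  fixes p q :: "complex poly"
  assumes id: "p * pstar p + [:1, 0, -1:] * (q * pstar q) = 1"
  shows "\<bar>x\<bar> \<le> 1 \<Longrightarrow> cmod (poly p (of_real x)) \<le> 1"
    and "1 \<le> \<bar>x\<bar> \<Longrightarrow> 1 \<le> cmod (poly p (of_real x))"
    and "odd_poly q \<Longrightarrow> poly (p * pstar p) (\<i> * of_real x) - 1 \<in> \<real>\<^sub>\<ge>\<^sub>0"
proof -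
  note real = qsp_identity_of_real[OF id, of x]
  show "cmod (poly p (of_real x)) \<le> 1" if "\<bar>x\<bar> \<le> 1"
  proof -
    have "0 \<le> (1 - x\<^sup>2) * (cmod (poly q (of_real x)))\<^sup>2" using that abs_square_le_1[of x] by simp
    then have "(cmod (poly p (of_real x)))\<^sup>2 \<le> 1" using real by linarith
    then show ?thesis by (simp add: abs_square_le_1)
  qed
  show "1 \<le> cmod (poly p (of_real x))" if "1 \<le> \<bar>x\<bar>"
  proof -
    have "(1 - x\<^sup>2) * (cmod (poly q (of_real x)))\<^sup>2 \<le> 0"
      using that abs_square_less_1[of x] by (intro mult_nonpos_nonneg) simp_all
    then have "\<not> (cmod (poly p (of_real x)))\<^sup>2 < 1" using real by linarith
    then show ?thesis by (simp add: abs_square_less_1)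
  qed
  show "poly (p * pstar p) (\<i> * of_real x) - 1 \<in> \<real>\<^sub>\<ge>\<^sub>0" if "odd_poly q"
  proof -
    have "of_real (1 + x\<^sup>2) * poly (q * pstar q) (\<i> * of_real x) \<in> \<real>\<^sub>\<le>\<^sub>0"
      using poly_mult_pstar_imag_odd[OF that]
      by (intro nonpos_Reals_mult_I1) (simp_all del: of_real_add of_real_power)
    moreover have "poly (p * pstar p) (\<i> * of_real x) - 1 =
        - (of_real (1 + x\<^sup>2) * poly (q * pstar q) (\<i> * of_real x))"
      using qsp_identity_imag[OF id, of x] by (metis add_diff_cancel_left' minus_diff_eq)
    ultimately show ?thesis by simp
  qed
qed

lemma qsp_identity_Q_bounds:
  fixes p q :: "complex poly"
  assumes id: "p * pstar p + [:1, 0, -1:] * (q * pstar q) = 1"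
  shows "\<bar>x\<bar> \<le> 1 \<Longrightarrow> sqrt (1 - x\<^sup>2) * cmod (poly q (of_real x)) \<le> 1"
    and "odd_poly p \<Longrightarrow> of_real (1 + x\<^sup>2) * poly (q * pstar q) (\<i> * of_real x) - 1 \<in> \<real>\<^sub>\<ge>\<^sub>0"
proof -
  show "sqrt (1 - x\<^sup>2) * cmod (poly q (of_real x)) \<le> 1" if "\<bar>x\<bar> \<le> 1"
  proof -
    have "0 \<le> 1 - x\<^sup>2" using that abs_square_le_1[of x] by simp
    then have "(sqrt (1 - x\<^sup>2) * cmod (poly q (of_real x)))\<^sup>2 = (1 - x\<^sup>2) * (cmod (poly q (of_real x)))\<^sup>2"
      by (simp add: power_mult_distrib)
    also have "\<dots> \<le> 1"
      using qsp_identity_of_real[OF id, of x] zero_le_power2[of "cmod (poly p (of_real x))"] by linarith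
    finally show ?thesis by (simp add: abs_square_le_1)
  qed
  show "of_real (1 + x\<^sup>2) * poly (q * pstar q) (\<i> * of_real x) - 1 \<in> \<real>\<^sub>\<ge>\<^sub>0" if "odd_poly p"
  proof -
    have "of_real (1 + x\<^sup>2) * poly (q * pstar q) (\<i> * of_real x) - 1 = - poly (p * pstar p) (\<i> * of_real x)"
      using qsp_identity_imag[OF id, of x] by (metis add_diff_cancel_right' minus_diff_eq)
    then show ?thesis using poly_mult_pstar_imag_odd[OF that, of x] by simp
  qed
qed

lemma one_minus_square_dvd_one_minus_mult_pstar:
  assumes "cmod (poly p 1) = 1" "cmod (poly p (-1)) = 1"
  shows "[:1, 0, -1:] dvd 1 - p * pstar p"
proof -
  have root: "poly (1 - p * pstar p) (of_real x) = 0" if "cmod (poly p (of_real x)) = 1" for x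
    using that by (simp only: poly_diff poly_1 poly_mult_pstar_of_real) simp
  obtain f1 where f1: "1 - p * pstar p = [:-1, 1:] * f1"
    using root[of 1] assms(1) by (metis of_real_1 poly_eq_0_iff_dvd dvdE minus_minus)
  have "poly f1 (-1) = 0" using root[of "-1"] assms(2) by (simp add: f1)
  then obtain f2 where "f1 = [:1, 1:] * f2" by (metis poly_eq_0_iff_dvd dvdE minus_minus)
  then have "1 - p * pstar p = [:1, 0, -1:] * (- f2)" by (simp add: f1 algebra_simps)
  then show ?thesis by (rule dvdI)
qed

lemma nonneg_Reals_div_one_minus_square:
  fixes b :: "complex poly"
  assumes "\<And>x. \<bar>x\<bar> \<le> 1 \<Longrightarrow> poly ([:1, 0, -1:] * b) (of_real x) \<in> \<real>\<^sub>\<ge>\<^sub>0"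
    "\<And>x. 1 \<le> \<bar>x\<bar> \<Longrightarrow> poly ([:1, 0, -1:] * b) (of_real x) \<in> \<real>\<^sub>\<le>\<^sub>0"
  shows "poly b (of_real x) \<in> \<real>\<^sub>\<ge>\<^sub>0"
proof (rule poly_of_real_in_closed_cofinite[OF closed_nonneg_Reals_complex, of "{-1, 1}"])
  fix t :: real assume "t \<notin> {-1, 1}"
  then have "\<bar>t\<bar> \<noteq> 1" by auto
  then have "t\<^sup>2 \<noteq> 1" by (simp add: abs_square_eq_1)
  then have nz: "(of_real (1 - t\<^sup>2) :: complex) \<noteq> 0" by (simp only: of_real_eq_0_iff)
  have "poly ([:1, 0, -1:] * b) (of_real t) = of_real (1 - t\<^sup>2) * poly b (of_real t)"
    by (simp add: algebra_simps power2_eq_square)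
  then have b: "poly b (of_real t) = poly ([:1, 0, -1:] * b) (of_real t) / of_real (1 - t\<^sup>2)"
    by (simp only: nonzero_mult_div_cancel_left[OF nz])
  show "poly b (of_real t) \<in> \<real>\<^sub>\<ge>\<^sub>0"
  proof (cases "\<bar>t\<bar> < 1")
    case True
    then have "0 \<le> 1 - t\<^sup>2" using abs_square_less_1[of t] by simp
    then have "of_real (1 - t\<^sup>2) \<in> (\<real>\<^sub>\<ge>\<^sub>0 :: complex set)" by (simp only: nonneg_Reals_of_real_iff)
    moreover have "poly ([:1, 0, -1:] * b) (of_real t) \<in> \<real>\<^sub>\<ge>\<^sub>0" using True by (intro assms(1)) simp
    ultimately show ?thesis by (subst b) (rule nonneg_Reals_divide_I)
  next
    case False
    then have "1 - t\<^sup>2 \<le> 0" using abs_square_less_1[of t] by simp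
    then have "of_real (1 - t\<^sup>2) \<in> (\<real>\<^sub>\<le>\<^sub>0 :: complex set)" by (simp only: nonpos_Reals_of_real_iff)
    moreover have "poly ([:1, 0, -1:] * b) (of_real t) \<in> \<real>\<^sub>\<le>\<^sub>0" using False by (intro assms(2)) simp
    ultimately show ?thesis by (subst b) (rule nonpos_Reals_divide_nonpos)
  qed
qed simp

lemma imag_sign_div_one_minus_square:
  fixes b :: "complex poly"
  assumes "poly ([:1, 0, -1:] * b) (\<i> * of_real t) \<in> (if e then \<real>\<^sub>\<ge>\<^sub>0 else \<real>\<^sub>\<le>\<^sub>0)"
  shows "poly b (\<i> * of_real t) \<in> (if e then \<real>\<^sub>\<ge>\<^sub>0 else \<real>\<^sub>\<le>\<^sub>0)"
proof -
  have pos: "of_real (1 + t\<^sup>2) \<in> (\<real>\<^sub>\<ge>\<^sub>0 :: complex set)"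
    by (simp only: nonneg_Reals_of_real_iff) simp
  have nz: "(of_real (1 + t\<^sup>2) :: complex) \<noteq> 0"
    by (simp only: of_real_eq_0_iff) (smt (verit) zero_le_power2)
  have "poly ([:1, 0, -1:] * b) (\<i> * of_real t) = of_real (1 + t\<^sup>2) * poly b (\<i> * of_real t)"
    by (simp only: poly_mult poly_one_minus_square) (simp add: power_mult_distrib)
  then have b: "poly b (\<i> * of_real t) = poly ([:1, 0, -1:] * b) (\<i> * of_real t) / of_real (1 + t\<^sup>2)"
    by (simp only: nonzero_mult_div_cancel_left[OF nz])
  show ?thesis
  proof (cases e)
    case True
    with assms have "poly ([:1, 0, -1:] * b) (\<i> * of_real t) \<in> \<real>\<^sub>\<ge>\<^sub>0" by simp
    with True pos show ?thesis by (simp only: if_True) (subst b, rule nonneg_Reals_divide_I)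
  next
    case False
    with assms have "poly ([:1, 0, -1:] * b) (\<i> * of_real t) \<in> \<real>\<^sub>\<le>\<^sub>0" by simp
    with False pos show ?thesis by (simp only: if_False) (subst b, rule nonpos_Reals_divide_I2)
  qed
qed

lemma one_minus_mult_pstar_imag:
  assumes par: "has_parity p (int k mod 2)"
    and imag: "even k \<Longrightarrow> poly (p * pstar p) (\<i> * of_real t) - 1 \<in> \<real>\<^sub>\<ge>\<^sub>0"
  shows "poly (1 - p * pstar p) (\<i> * of_real t) \<in> (if even ((int k - 1) mod 2) then \<real>\<^sub>\<ge>\<^sub>0 else \<real>\<^sub>\<le>\<^sub>0)"
proof (cases "even k")
  case True
  then show ?thesis using imag by simp (metis minus_diff_eq uminus_nonpos_Reals_iff)
next
  case False
  then have "poly (p * pstar p) (\<i> * of_real t) \<in> \<real>\<^sub>\<le>\<^sub>0"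
    using poly_mult_pstar_imag[OF par, of t] by simp
  then show ?thesis
    using False nonneg_Reals_add_I[OF nonneg_Reals_one_I, of "- poly (p * pstar p) (\<i> * of_real t)"]
    by simp
qed

lemma complement_of_P_bounds:
  fixes p :: "complex poly"
  assumes par: "has_parity p (int k mod 2)"
    and inside: "\<And>x. \<bar>x\<bar> \<le> 1 \<Longrightarrow> cmod (poly p (of_real x)) \<le> 1"
    and outside: "\<And>x. 1 \<le> \<bar>x\<bar> \<Longrightarrow> 1 \<le> cmod (poly p (of_real x))"
    and imag: "\<And>x. even k \<Longrightarrow> poly (p * pstar p) (\<i> * of_real x) - 1 \<in> \<real>\<^sub>\<ge>\<^sub>0"
  obtains b where "1 - p * pstar p = [:1, 0, -1:] * b" "even_poly b"
    "\<And>x. poly b (of_real x) \<in> \<real>\<^sub>\<ge>\<^sub>0"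
    "\<And>x. poly b (\<i> * of_real x) \<in> (if even ((int k - 1) mod 2) then \<real>\<^sub>\<ge>\<^sub>0 else \<real>\<^sub>\<le>\<^sub>0)"
proof -
  have "cmod (poly p 1) = 1" "cmod (poly p (-1)) = 1"
    using inside[of 1] outside[of 1] inside[of "-1"] outside[of "-1"] by simp_all
  then obtain b where fb: "1 - p * pstar p = [:1, 0, -1:] * b"
    using one_minus_square_dvd_one_minus_mult_pstar by (blast elim: dvdE)
  have "even_poly ([:1, 0, -1:] * b)"
    unfolding fb[symmetric] using even_poly_mult_pstar[OF par] by (simp add: even_poly_iff)
  then have "even_poly b" by (rule even_poly_cancel) (simp_all add: even_poly_iff)
  moreover have "poly b (of_real x) \<in> \<real>\<^sub>\<ge>\<^sub>0" for x
  proof (rule nonneg_Reals_div_one_minus_square)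
    have f: "poly ([:1, 0, -1:] * b) (of_real y) = of_real (1 - (cmod (poly p (of_real y)))\<^sup>2)" for y
      unfolding fb[symmetric] by (simp only: poly_diff poly_1 poly_mult_pstar_of_real) simp
    show "poly ([:1, 0, -1:] * b) (of_real y) \<in> \<real>\<^sub>\<ge>\<^sub>0" if "\<bar>y\<bar> \<le> 1" for y
      using inside[OF that] by (simp only: f nonneg_Reals_of_real_iff) (simp add: abs_square_le_1)
    show "poly ([:1, 0, -1:] * b) (of_real y) \<in> \<real>\<^sub>\<le>\<^sub>0" if "1 \<le> \<bar>y\<bar>" for y
      using outside[OF that] by (simp only: f nonpos_Reals_of_real_iff) (simp add: one_le_power)
  qed
  moreover have "poly b (\<i> * of_real x) \<in> (if even ((int k - 1) mod 2) then \<real>\<^sub>\<ge>\<^sub>0 else \<real>\<^sub>\<le>\<^sub>0)" for x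
    using one_minus_mult_pstar_imag[OF par imag[of x]] unfolding fb
    by (rule imag_sign_div_one_minus_square)
  ultimately show ?thesis using fb that by blast
qed

lemma ex_Q_of_P_bounds:
  fixes p :: "complex poly"
  assumes deg: "deg_le p (int k)" and par: "has_parity p (int k mod 2)"
    and inside: "\<And>x. \<bar>x\<bar> \<le> 1 \<Longrightarrow> cmod (poly p (of_real x)) \<le> 1"
    and outside: "\<And>x. 1 \<le> \<bar>x\<bar> \<Longrightarrow> 1 \<le> cmod (poly p (of_real x))"
    and imag: "\<And>x. even k \<Longrightarrow> poly (p * pstar p) (\<i> * of_real x) - 1 \<in> \<real>\<^sub>\<ge>\<^sub>0"
  shows "\<exists>q. qsp_conds k p q"
proof -
  obtain b where fb: "1 - p * pstar p = [:1, 0, -1:] * b" and b: "even_poly b"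
    "\<And>x. poly b (of_real x) \<in> \<real>\<^sub>\<ge>\<^sub>0"
    "\<And>x. poly b (\<i> * of_real x) \<in> (if even ((int k - 1) mod 2) then \<real>\<^sub>\<ge>\<^sub>0 else \<real>\<^sub>\<le>\<^sub>0)"
    using complement_of_P_bounds[OF par inside outside imag] by blast
  obtain q where q: "has_parity q ((int k - 1) mod 2)" "b = q * pstar q"
    using even_poly_eq_mult_pstar[OF b] by blast
  have "degree (1 - p * pstar p) \<le> degree (p * pstar p)"
    using degree_diff_le_max[of 1 "p * pstar p"] by simp
  then have "degree ([:1, 0, -1:] * (q * pstar q)) \<le> 2 * k"
    using deg by (auto simp: fb q(2) degree_mult_pstar deg_le_def)
  then have "deg_le q (int k - 1)"
    by (intro deg_le_of_degree_mult_pstar[where m = "[:1, 0, -1:]"]) auto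
  moreover have "p * pstar p + [:1, 0, -1:] * (q * pstar q) = 1"
    using fb q(2) by (metis add.commute diff_add_cancel)
  ultimately show ?thesis using deg par q(1) by (auto simp: qsp_conds_iff)
qed

lemma one_minus_qsp_Q_term_of_real:
  fixes q :: "complex poly"
  assumes inside: "\<And>x. \<bar>x\<bar> \<le> 1 \<Longrightarrow> sqrt (1 - x\<^sup>2) * cmod (poly q (of_real x)) \<le> 1"
  shows "poly (1 - [:1, 0, -1:] * (q * pstar q)) (of_real x) \<in> \<real>\<^sub>\<ge>\<^sub>0"
proof -
  have "(1 - x\<^sup>2) * (cmod (poly q (of_real x)))\<^sup>2 \<le> 1"
  proof (cases "\<bar>x\<bar> \<le> 1")
    case True
    then have "0 \<le> 1 - x\<^sup>2" using abs_square_le_1[of x] by simp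
    then have "(1 - x\<^sup>2) * (cmod (poly q (of_real x)))\<^sup>2 = (sqrt (1 - x\<^sup>2) * cmod (poly q (of_real x)))\<^sup>2"
      by (simp add: power_mult_distrib)
    also have "\<dots> \<le> 1"
      using inside[OF True] \<open>0 \<le> 1 - x\<^sup>2\<close> by (simp add: abs_square_le_1 abs_mult)
    finally show ?thesis .
  next
    case False
    then have "1 - x\<^sup>2 \<le> 0" using abs_square_le_1[of x] by simp
    then show ?thesis by (smt (verit) mult_nonpos_nonneg zero_le_power2)
  qed
  moreover have "poly (1 - [:1, 0, -1:] * (q * pstar q)) (of_real x) =
      of_real (1 - (1 - x\<^sup>2) * (cmod (poly q (of_real x)))\<^sup>2)"
    by (simp only: poly_diff poly_1 poly_mult[of "[:1, 0, -1:]"] poly_mult_pstar_of_real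
        poly_one_minus_square) simp
  ultimately show ?thesis by (simp only: nonneg_Reals_of_real_iff)
qed

lemma one_minus_qsp_Q_term_imag:
  fixes q :: "complex poly"
  assumes par: "has_parity q ((int k - 1) mod 2)"
    and imag: "odd k \<Longrightarrow> of_real (1 + t\<^sup>2) * poly (q * pstar q) (\<i> * of_real t) - 1 \<in> \<real>\<^sub>\<ge>\<^sub>0"
  shows "poly (1 - [:1, 0, -1:] * (q * pstar q)) (\<i> * of_real t) \<in> (if even (int k mod 2) then \<real>\<^sub>\<ge>\<^sub>0 else \<real>\<^sub>\<le>\<^sub>0)"
proof -
  have g: "poly (1 - [:1, 0, -1:] * (q * pstar q)) (\<i> * of_real t) =
      1 - of_real (1 + t\<^sup>2) * poly (q * pstar q) (\<i> * of_real t)"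
    by (simp only: poly_diff poly_1 poly_mult[of "[:1, 0, -1:]"] poly_one_minus_square)
      (simp add: power_mult_distrib)
  show ?thesis
  proof (cases "even k")
    case True
    then have "poly (q * pstar q) (\<i> * of_real t) \<in> \<real>\<^sub>\<le>\<^sub>0"
      using poly_mult_pstar_imag[OF par, of t] by simp
    then have "of_real (1 + t\<^sup>2) * poly (q * pstar q) (\<i> * of_real t) \<in> \<real>\<^sub>\<le>\<^sub>0"
      by (intro nonpos_Reals_mult_I1) (simp_all del: of_real_add of_real_power)
    then show ?thesis
      using True nonneg_Reals_add_I[OF nonneg_Reals_one_I,
          of "- (of_real (1 + t\<^sup>2) * poly (q * pstar q) (\<i> * of_real t))"]
      by (simp only: g) simp
  next
    case False
    then have "1 - of_real (1 + t\<^sup>2) * poly (q * pstar q) (\<i> * of_real t) \<in> \<real>\<^sub>\<le>\<^sub>0"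
      using imag by (metis minus_diff_eq uminus_nonpos_Reals_iff)
    then show ?thesis using False by (simp only: g) simp
  qed
qed

lemma ex_P_of_Q_bounds:
  fixes q :: "complex poly"
  assumes deg: "deg_le q (int k - 1)" and par: "has_parity q ((int k - 1) mod 2)"
    and inside: "\<And>x. \<bar>x\<bar> \<le> 1 \<Longrightarrow> sqrt (1 - x\<^sup>2) * cmod (poly q (of_real x)) \<le> 1"
    and imag: "\<And>x. odd k \<Longrightarrow> of_real (1 + x\<^sup>2) * poly (q * pstar q) (\<i> * of_real x) - 1 \<in> \<real>\<^sub>\<ge>\<^sub>0"
  shows "\<exists>p. qsp_conds k p q"
proof -
  have "even_poly (1 - [:1, 0, -1:] * (q * pstar q))"
    using even_poly_mult_pstar[OF par] by (simp add: even_poly_iff)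
  then obtain p where p: "has_parity p (int k mod 2)" "1 - [:1, 0, -1:] * (q * pstar q) = p * pstar p"
    using even_poly_eq_mult_pstar one_minus_qsp_Q_term_of_real[OF inside]
      one_minus_qsp_Q_term_imag[OF par imag] by blast
  have "degree ([:1, 0, -1:] * (q * pstar q)) \<le> 2 * k"
  proof (cases "q = 0")
    case False
    then have "degree ([:1, 0, -1:] * (q * pstar q)) = 2 + 2 * degree q"
      by (subst degree_mult_eq) (simp_all add: degree_mult_pstar)
    then show ?thesis using deg False by (simp add: deg_le_def)
  qed simp
  then have "degree (1 * (p * pstar p)) \<le> 2 * k"
    using degree_diff_le_max[of 1 "[:1, 0, -1:] * (q * pstar q)"] by (simp add: p(2)[symmetric])
  then have "deg_le p (int k)" by (intro deg_le_of_degree_mult_pstar[where m = 1]) auto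
  moreover have "p * pstar p + [:1, 0, -1:] * (q * pstar q) = 1"
    using p(2) by (metis diff_add_cancel)
  ultimately show ?thesis using deg par p(1) by (auto simp: qsp_conds_iff)
qed
lemma ex_qsp_conds_Q_iff:
  "(\<exists>q. qsp_conds k p q) \<longleftrightarrow>
     deg_le p (int k) \<and> has_parity p (int k mod 2) \<and>
     (\<forall>x::real. -1 \<le> x \<and> x \<le> 1 \<longrightarrow> cmod (poly p (of_real x)) \<le> 1) \<and>
     (\<forall>x::real. (x \<le> -1 \<or> 1 \<le> x) \<longrightarrow> cmod (poly p (of_real x)) \<ge> 1) \<and>
     (even k \<longrightarrow> (\<forall>x::real.
         poly p (\<i> * of_real x) * poly (pstar p) (\<i> * of_real x) \<in> \<real> \<and>
         Re (poly p (\<i> * of_real x) * poly (pstar p) (\<i> * of_real x)) \<ge> 1))"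
proof -
  have abs_iff: "(-1 \<le> x \<and> x \<le> 1) = (\<bar>x\<bar> \<le> 1)" "(x \<le> -1 \<or> 1 \<le> x) = (1 \<le> \<bar>x\<bar>)" for x :: real
    by auto
  have imag_iff: "(poly p (\<i> * of_real x) * poly (pstar p) (\<i> * of_real x) \<in> \<real> \<and>
      Re (poly p (\<i> * of_real x) * poly (pstar p) (\<i> * of_real x)) \<ge> 1) \<longleftrightarrow>
      poly (p * pstar p) (\<i> * of_real x) - 1 \<in> \<real>\<^sub>\<ge>\<^sub>0" for x
    by (simp only: poly_mult Reals_Re_ge_one_iff)
  show ?thesis
    unfolding abs_iff imag_iff
  proof
    assume "\<exists>q. qsp_conds k p q"
    then obtain q where pq: "deg_le p (int k)" "has_parity p (int k mod 2)"
      "has_parity q ((int k - 1) mod 2)" "p * pstar p + [:1, 0, -1:] * (q * pstar q) = 1"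
      by (auto simp: qsp_conds_iff)
    then have "even k \<Longrightarrow> odd_poly q" by (simp add: has_parity_iff)
    then show "deg_le p (int k) \<and> has_parity p (int k mod 2) \<and>
        (\<forall>x. \<bar>x\<bar> \<le> 1 \<longrightarrow> cmod (poly p (of_real x)) \<le> 1) \<and>
        (\<forall>x. 1 \<le> \<bar>x\<bar> \<longrightarrow> cmod (poly p (of_real x)) \<ge> 1) \<and>
        (even k \<longrightarrow> (\<forall>x. poly (p * pstar p) (\<i> * of_real x) - 1 \<in> \<real>\<^sub>\<ge>\<^sub>0))"
      using pq qsp_identity_P_bounds[OF pq(4)] by blast
  qed (blast intro: ex_Q_of_P_bounds)
qed

lemma ex_qsp_conds_P_iff:
  "(\<exists>p. qsp_conds k p q) \<longleftrightarrow>
     deg_le q (int k - 1) \<and> has_parity q ((int k - 1) mod 2) \<and>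
     (\<forall>x::real. -1 \<le> x \<and> x \<le> 1 \<longrightarrow> sqrt (1 - x^2) * cmod (poly q (of_real x)) \<le> 1) \<and>
     (odd k \<longrightarrow> (\<forall>x::real.
         complex_of_real (1 + x^2) * poly q (\<i> * of_real x) * poly (pstar q) (\<i> * of_real x) \<in> \<real> \<and>
         Re (complex_of_real (1 + x^2) * poly q (\<i> * of_real x) * poly (pstar q) (\<i> * of_real x)) \<ge> 1))"
proof -
  have abs_iff: "(-1 \<le> x \<and> x \<le> 1) = (\<bar>x\<bar> \<le> 1)" for x :: real
    by auto
  have imag_iff: "(complex_of_real (1 + x^2) * poly q (\<i> * of_real x) * poly (pstar q) (\<i> * of_real x) \<in> \<real> \<and>
      Re (complex_of_real (1 + x^2) * poly q (\<i> * of_real x) * poly (pstar q) (\<i> * of_real x)) \<ge> 1) \<longleftrightarrow>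
      of_real (1 + x\<^sup>2) * poly (q * pstar q) (\<i> * of_real x) - 1 \<in> \<real>\<^sub>\<ge>\<^sub>0" for x
    by (simp only: poly_mult mult.assoc Reals_Re_ge_one_iff)
  show ?thesis
    unfolding abs_iff imag_iff
  proof
    assume "\<exists>p. qsp_conds k p q"
    then obtain p where pq: "deg_le q (int k - 1)" "has_parity q ((int k - 1) mod 2)"
      "has_parity p (int k mod 2)" "p * pstar p + [:1, 0, -1:] * (q * pstar q) = 1"
      by (auto simp: qsp_conds_iff)
    then have "odd k \<Longrightarrow> odd_poly p" by (simp add: has_parity_iff)
    then show "deg_le q (int k - 1) \<and> has_parity q ((int k - 1) mod 2) \<and>
        (\<forall>x. \<bar>x\<bar> \<le> 1 \<longrightarrow> sqrt (1 - x\<^sup>2) * cmod (poly q (of_real x)) \<le> 1) \<and>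
        (odd k \<longrightarrow> (\<forall>x. of_real (1 + x\<^sup>2) * poly (q * pstar q) (\<i> * of_real x) - 1 \<in> \<real>\<^sub>\<ge>\<^sub>0))"
      using pq qsp_identity_Q_bounds[OF pq(4)] by blast
  qed (blast intro: ex_P_of_Q_bounds)
qed

theorem mainTheorem2:
  fixes k :: nat
  shows "(\<forall>P. (\<exists>Q. qsp_conds k P Q) \<longleftrightarrow>
            (deg_le P (int k) \<and> has_parity P (int k mod 2) \<and>
             (\<forall>x::real. -1 \<le> x \<and> x \<le> 1 \<longrightarrow> cmod (poly P (of_real x)) \<le> 1) \<and>
             (\<forall>x::real. (x \<le> -1 \<or> 1 \<le> x) \<longrightarrow> cmod (poly P (of_real x)) \<ge> 1) \<and>
             (even k \<longrightarrow> (\<forall>x::real.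
                 poly P (\<i> * of_real x) * poly (pstar P) (\<i> * of_real x) \<in> \<real> \<and>
                 Re (poly P (\<i> * of_real x) * poly (pstar P) (\<i> * of_real x)) \<ge> 1))))
       \<and>
         (\<forall>Q. (\<exists>P. qsp_conds k P Q) \<longleftrightarrow>
            (deg_le Q (int k - 1) \<and> has_parity Q ((int k - 1) mod 2) \<and>
             (\<forall>x::real. -1 \<le> x \<and> x \<le> 1 \<longrightarrow> sqrt (1 - x^2) * cmod (poly Q (of_real x)) \<le> 1) \<and>
             (odd k \<longrightarrow> (\<forall>x::real.
                 complex_of_real (1 + x^2) * poly Q (\<i> * of_real x) * poly (pstar Q) (\<i> * of_real x) \<in> \<real> \<and>
                 Re (complex_of_real (1 + x^2) * poly Q (\<i> * of_real x) * poly (pstar Q) (\<i> * of_real x)) \<ge> 1))))"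
  by (intro conjI allI ex_qsp_conds_Q_iff ex_qsp_conds_P_iff)

end
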